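(* Let $\mathcal{D}=\{(x^{(i)},y^{(i)})\}_{i=1}^N$ be a finite paired dataset with $x^{(i)}\in\mathbb{R}^{d_x}$, $y^{(i)}\in\mathbb{R}^{d_y}$, let $d>d_x$ and $d>d_y$, and let $\alpha,\beta:[0,1]\to\mathbb{R}$ be smooth functions that are nonzero except possibly at $t=0$ and $t=1$. Then there exist a data encoder $f_\phi:\mathbb{R}^{d_x}\to\mathbb{R}^d$ and a label encoder $g_\varphi:\mathbb{R}^{d_y}\to\mathbb{R}^d$ such that $(f_\phi,g_\varphi)$ does not induce a target trajectory crossing for data pairs in $\mathcal{D}$, while $g_\varphi$ (together with a suitable label decoder $d_\psi:\mathbb{R}^d\to\mathbb{R}^{d_y}$) minimizes the label autoencoding loss $\mathcal{L}_{label\_ae}(\psi,\varphi)=\mathbb{E}_{(x,y)\sim\mathcal{D}}\big[\|d_\psi(g_\varphi(y))-y\|_2^2\big]$.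
   Context: Given encoders $f_\phi,g_\varphi$, one sets $z_0=f_\phi(x)$, $z_1=g_\varphi(y)$ and uses the predefined interpolation $z_t=F(z_0,z_1,t)=\alpha_t z_0+\beta_t z_1$ for $t\in[0,1]$. The encoders $(f_\phi,g_\varphi)$ are said to induce a target trajectory crossing if there exists a tuple $(t,x,y,x',y')$, with $(x,y),(x',y')$ data pairs in $\mathcal{D}$, $t\in[0,1]$, $x\neq x'$ and $y\neq y'$, such that $\alpha_t f_\phi(x)+\beta_t g_\varphi(y)=\alpha_t f_\phi(x')+\beta_t g_\varphi(y')$. "Non-crossing" means no such tuple exists. *)

theory Defs
  imports "HOL-Analysis.Analysis"
begin

definition smooth_on :: "real set \<Rightarrow> (real \<Rightarrow> real) \<Rightarrow> bool" where
  "smooth_on S f \<longleftrightarrow> (\<exists>Df :: nat \<Rightarrow> real \<Rightarrow> real. Df 0 = f \<and>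
     (\<forall>n. \<forall>t\<in>S. (Df n has_real_derivative Df (Suc n) t) (at t within S)))"

definition target_trajectory_crossing ::
  "(real \<Rightarrow> real) \<Rightarrow> (real \<Rightarrow> real) \<Rightarrow> ('a \<Rightarrow> 'c::real_vector) \<Rightarrow> ('b \<Rightarrow> 'c)
    \<Rightarrow> ('a \<times> 'b) list \<Rightarrow> bool" where
  "target_trajectory_crossing \<alpha> \<beta> f g D \<longleftrightarrow>
     (\<exists>t\<in>{0..1}. \<exists>x y x' y'. (x, y) \<in> set D \<and> (x', y') \<in> set D \<and> x \<noteq> x' \<and> y \<noteq> y' \<and>
        \<alpha> t *\<^sub>R f x + \<beta> t *\<^sub>R g y = \<alpha> t *\<^sub>R f x' + \<beta> t *\<^sub>R g y')"

definition label_ae_loss ::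
  "('a \<times> 'b::real_normed_vector) list \<Rightarrow> ('c \<Rightarrow> 'b) \<Rightarrow> ('b \<Rightarrow> 'c) \<Rightarrow> real" where
  "label_ae_loss D dec g = (\<Sum>(x, y)\<leftarrow>D. (norm (dec (g y) - y))\<^sup>2) / real (length D)"

end

theory Submission
  imports Defs
begin

text \<open>Encode the data by distinct multiples of a vector \<open>u\<close> and the labels by distinct
  multiples of a vector \<open>v\<close> orthogonal to \<open>u\<close> (two basis vectors exist since \<open>d \<ge> 2\<close>).
  On the interpolation at time \<open>t\<close>, the \<open>u\<close>-component is \<open>\<alpha> t\<close> times the data code and the
  \<open>v\<close>-component is \<open>\<beta> t\<close> times the label code, so trajectories of pairs with distinct data
  and distinct labels can only meet where \<open>\<alpha> t = \<beta> t = 0\<close>. The label encoder is injective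
  on the dataset, so a left inverse decodes every label exactly and the loss attains its
  lower bound \<open>0\<close>.\<close>

lemma finite_imp_inj_on_real:
  assumes "finite A"
  obtains \<phi> :: "'a \<Rightarrow> real" where "inj_on \<phi> A"
proof -
  obtain h :: "'a \<Rightarrow> nat" where "inj_on h A"
    using finite_imp_inj_to_nat_seg[OF assms] by metis
  then have "inj_on (\<lambda>x. real (h x)) A"
    by (simp add: inj_on_def)
  then show thesis by (rule that)
qed

lemma two_Basis_vectors:
  assumes "2 \<le> DIM('a)"
  obtains u v :: "'a::euclidean_space" where "u \<in> Basis" "v \<in> Basis" "u \<noteq> v"
  using assms
  by (metis One_nat_def Suc_1 card_le_Suc0_iff_eq finite_Basis not_less_eq_eq)

lemma no_target_trajectory_crossing_orthogonal_codes:
  fixes u v :: "'c::real_inner" and \<phi> :: "'a \<Rightarrow> real" and \<psi> :: "'b \<Rightarrow> real"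
  assumes "orthogonal u v" "u \<noteq> 0" "v \<noteq> 0"
    and inj_\<phi>: "inj_on \<phi> (fst ` set D)"
    and inj_\<psi>: "inj_on \<psi> (snd ` set D)"
    and not_both_zero: "\<forall>t\<in>{0..1}. \<alpha> t \<noteq> 0 \<or> \<beta> t \<noteq> 0"
  shows "\<not> target_trajectory_crossing \<alpha> \<beta> (\<lambda>x. \<phi> x *\<^sub>R u) (\<lambda>y. \<psi> y *\<^sub>R v) D"
proof
  assume "target_trajectory_crossing \<alpha> \<beta> (\<lambda>x. \<phi> x *\<^sub>R u) (\<lambda>y. \<psi> y *\<^sub>R v) D"
  then obtain t x y x' y' where t: "t \<in> {0..1}"
    and in_D: "(x, y) \<in> set D" "(x', y') \<in> set D" and "x \<noteq> x'" "y \<noteq> y'"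
    and meet: "\<alpha> t *\<^sub>R \<phi> x *\<^sub>R u + \<beta> t *\<^sub>R \<psi> y *\<^sub>R v
             = \<alpha> t *\<^sub>R \<phi> x' *\<^sub>R u + \<beta> t *\<^sub>R \<psi> y' *\<^sub>R v"
    unfolding target_trajectory_crossing_def by blast
  have "\<phi> x \<noteq> \<phi> x'"
    using inj_on_eq_iff[OF inj_\<phi>] in_D \<open>x \<noteq> x'\<close> by force
  moreover have "\<psi> y \<noteq> \<psi> y'"
    using inj_on_eq_iff[OF inj_\<psi>] in_D \<open>y \<noteq> y'\<close> by force
  moreover have "\<alpha> t * \<phi> x = \<alpha> t * \<phi> x'"
    using arg_cong[OF meet, of "\<lambda>z. u \<bullet> z"] \<open>orthogonal u v\<close> \<open>u \<noteq> 0\<close>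
    by (simp add: inner_add_right orthogonal_def)
  moreover have "\<beta> t * \<psi> y = \<beta> t * \<psi> y'"
    using arg_cong[OF meet, of "\<lambda>z. v \<bullet> z"] \<open>orthogonal u v\<close> \<open>v \<noteq> 0\<close>
    by (simp add: inner_add_right orthogonal_def inner_commute)
  ultimately show False
    using not_both_zero t by auto
qed

lemma label_ae_loss_nonneg: "0 \<le> label_ae_loss D dec g"
  unfolding label_ae_loss_def by (intro divide_nonneg_nonneg sum_list_nonneg) auto

lemma label_ae_loss_eq_0:
  assumes "\<forall>(x, y)\<in>set D. dec (g y) = y"
  shows "label_ae_loss D dec g = 0"
proof -
  have "(\<Sum>(x, y)\<leftarrow>D. (norm (dec (g y) - y))\<^sup>2) = (\<Sum>p\<leftarrow>D. 0::real)"
    using assms by (intro arg_cong[where f = sum_list] map_cong) auto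
  then show ?thesis
    unfolding label_ae_loss_def by simp
qed

lemma inj_on_imp_label_ae_loss_minimal:
  assumes "inj_on g (snd ` set D)"
  shows "label_ae_loss D (the_inv_into (snd ` set D) g) g \<le> label_ae_loss D dec' g'"
proof -
  have "label_ae_loss D (the_inv_into (snd ` set D) g) g = 0"
    using assms by (intro label_ae_loss_eq_0) (force intro: the_inv_into_f_f)
  then show ?thesis using label_ae_loss_nonneg by metis
qed

theorem proposition1:
  fixes D :: "('a::euclidean_space \<times> 'b::euclidean_space) list"
    and \<alpha> \<beta> :: "real \<Rightarrow> real"
  assumes dim_x: "DIM('a) < DIM('c::euclidean_space)"
    and dim_y: "DIM('b) < DIM('c)"
    and smooth_\<alpha>: "smooth_on {0..1} \<alpha>"
    and smooth_\<beta>: "smooth_on {0..1} \<beta>"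
    and nz_\<alpha>: "\<forall>t\<in>{0<..<1}. \<alpha> t \<noteq> 0"
    and nz_\<beta>: "\<forall>t\<in>{0<..<1}. \<beta> t \<noteq> 0"
    and not_both_zero: "\<forall>t\<in>{0..1}. \<alpha> t \<noteq> 0 \<or> \<beta> t \<noteq> 0"
  shows "\<exists>(f :: 'a \<Rightarrow> 'c) (g :: 'b \<Rightarrow> 'c) (dec :: 'c \<Rightarrow> 'b).
           \<not> target_trajectory_crossing \<alpha> \<beta> f g D \<and>
           (\<forall>(dec' :: 'c \<Rightarrow> 'b) (g' :: 'b \<Rightarrow> 'c). label_ae_loss D dec g \<le> label_ae_loss D dec' g')"
proof -
  have "2 \<le> DIM('c)"
    using dim_x DIM_positive[where 'a = 'a] by linarith
  then obtain u v :: 'c where "u \<in> Basis" "v \<in> Basis" "u \<noteq> v"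
    by (rule two_Basis_vectors)
  then have "orthogonal u v" "u \<noteq> 0" "v \<noteq> 0"
    by (auto simp: orthogonal_def inner_not_same_Basis)
  obtain \<phi> :: "'a \<Rightarrow> real" where \<phi>: "inj_on \<phi> (fst ` set D)"
    using finite_imp_inj_on_real[of "fst ` set D"] by blast
  obtain \<psi> :: "'b \<Rightarrow> real" where \<psi>: "inj_on \<psi> (snd ` set D)"
    using finite_imp_inj_on_real[of "snd ` set D"] by blast
  define g where "g y = \<psi> y *\<^sub>R v" for y
  have "inj_on g (snd ` set D)"
    using \<psi> \<open>v \<noteq> 0\<close> by (auto simp: g_def inj_on_def)
  then show ?thesis
    using no_target_trajectory_crossing_orthogonal_codes[OF \<open>orthogonal u v\<close> \<open>u \<noteq> 0\<close>
        \<open>v \<noteq> 0\<close> \<phi> \<psi> not_both_zero]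
      inj_on_imp_label_ae_loss_minimal
    unfolding g_def[abs_def] by blast
qed

end
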